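(* Let $n,T\in\mathbb{N}$ and let real numbers $r_{it}$, $i\in\{1,\ldots,n\}$, $t\in\{1,\ldots,T\}$, be given. Consider the random return vector $\boldsymbol{r}=(r_1,\ldots,r_n)^{\mathsf T}$ which takes the value $(r_{1t},\ldots,r_{nt})^{\mathsf T}$ in scenario $t$, each scenario having probability $1/T$, and let $\mu_i=\frac1T\sum_{t=1}^T r_{it}$, $\boldsymbol{\mu}=(\mu_1,\ldots,\mu_n)^{\mathsf T}$. Define $\mathrm{MAD}(\boldsymbol{x})=\mathbb{E}\big[|(\boldsymbol{r}-\boldsymbol{\mu})^{\mathsf T}\boldsymbol{x}|\big]=\frac1T\sum_{t=1}^T|\sum_{i=1}^n (r_{it}-\mu_i)x_i|$ for $\boldsymbol{x}\in\mathbb{R}^n$, with convex subdifferential $\partial\mathrm{MAD}(\boldsymbol{x})$. Let $\Delta^{n-1}=\{\boldsymbol{x}\in\mathbb{R}^n: x_i\ge0\ \forall i,\ \sum_i x_i=1\}$, and call $\boldsymbol{x}\in\Delta^{n-1}$ a MAD-RP portfolio if there exist $\boldsymbol{s}\in\partial\mathrm{MAD}(\boldsymbol{x})$ and $\lambda\in\mathbb{R}$ with $x_is_i=\lambda$ for all $i$. Suppose that the only vector $\boldsymbol{x}\in\mathbb{R}^n_+$ with $\sum_{i}(r_{it}-\mu_i)x_i=0$ for every $t$ is $\boldsymbol{x}=0$, and suppose moreover that $$(r_{it}-\mu_i)(r_{jt}-\mu_j)\geq 0\quad\text{for every } t\in\{1,\ldots,T\} \text{ and } i,j\in\{1,\ldots,n\},\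 i\neq j.$$ Then the unique MAD-RP portfolio is given by $$x_i=\frac{\mathbb{E}[|r_i-\mu_i|]^{-1}}{\sum_{j=1}^n\mathbb{E}[|r_j-\mu_j|]^{-1}},\qquad i\in\{1,\ldots,n\}.$$
   Context: $\mathbb{R}^n_+$ denotes the set of vectors in $\mathbb{R}^n$ with all components nonnegative; $\mathbb{E}[|r_i-\mu_i|]=\frac1T\sum_{t=1}^T|r_{it}-\mu_i|$. *)

theory Defs
  imports "HOL-Analysis.Analysis"
begin

text \<open>Scenario returns: r t i is the return of asset i in scenario t; scenarios
  range over a finite type 't (T = CARD('t)), assets over a finite type 'n (n = CARD('n)).\<close>

definition mean_ret :: "('t::finite \<Rightarrow> 'n::finite \<Rightarrow> real) \<Rightarrow> 'n \<Rightarrow> real" where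
  "mean_ret r i = (\<Sum>t\<in>UNIV. r t i) / real CARD('t)"

definition MAD :: "('t::finite \<Rightarrow> 'n::finite \<Rightarrow> real) \<Rightarrow> real^'n \<Rightarrow> real" where
  "MAD r x = (\<Sum>t\<in>UNIV. \<bar>\<Sum>i\<in>UNIV. (r t i - mean_ret r i) * x $ i\<bar>) / real CARD('t)"

definition abs_dev :: "('t::finite \<Rightarrow> 'n::finite \<Rightarrow> real) \<Rightarrow> 'n \<Rightarrow> real" where
  "abs_dev r i = (\<Sum>t\<in>UNIV. \<bar>r t i - mean_ret r i\<bar>) / real CARD('t)"

definition subdiff :: "(real^'n \<Rightarrow> real) \<Rightarrow> real^'n \<Rightarrow> (real^'n) set" where
  "subdiff f x = {s. \<forall>y. f y \<ge> f x + s \<bullet> (y - x)}"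

definition prob_simplex :: "(real^'n) set" where
  "prob_simplex = {x. (\<forall>i. x $ i \<ge> 0) \<and> (\<Sum>i\<in>UNIV. x $ i) = 1}"

definition MAD_RP :: "('t::finite \<Rightarrow> 'n::finite \<Rightarrow> real) \<Rightarrow> real^'n \<Rightarrow> bool" where
  "MAD_RP r x \<longleftrightarrow> x \<in> prob_simplex \<and>
     (\<exists>s \<in> subdiff (MAD r) x. \<exists>lam::real. \<forall>i. x $ i * s $ i = lam)"

end

theory Submission
  imports Defs
begin

(* Under the comonotonicity hypothesis every centred scenario row r_t - mu has a constant
   sign, so |(r_t - mu)^T x| = sum_i |r_it - mu_i| x_i for x >= 0, and MAD agrees on the
   nonnegative orthant with the linear function x |-> a^T x, a_i = E|r_i - mu_i|, while
   dominating it everywhere. Hence a is a subgradient at every x >= 0; conversely testing a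
   subgradient s at x against 0 and x + e_i forces x_i s_i = x_i a_i. The risk parity
   condition thus becomes x_i a_i = lambda, and nondegeneracy makes every a_i positive. *)

lemma same_sign_if_pairwise_products_nonneg:
  fixes d :: "'a \<Rightarrow> 'b::linordered_idom"
  assumes "\<And>i j. i \<noteq> j \<Longrightarrow> d i * d j \<ge> 0"
  shows "(\<forall>i. d i \<ge> 0) \<or> (\<forall>i. d i \<le> 0)"
proof (rule ccontr)
  assume "\<not> ?thesis"
  then obtain i j where "d i < 0" "d j > 0" by (auto simp: not_le)
  moreover from this have "i \<noteq> j" by auto
  ultimately show False using assms[of i j] mult_neg_pos[of "d i" "d j"] by linarith
qed

lemma abs_sum_abs_mult_eq_abs_sum_mult:
  fixes d y :: "'a \<Rightarrow> 'b::linordered_idom"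
  assumes "\<And>i j. i \<noteq> j \<Longrightarrow> d i * d j \<ge> 0"
  shows "\<bar>\<Sum>i\<in>A. \<bar>d i\<bar> * y i\<bar> = \<bar>\<Sum>i\<in>A. d i * y i\<bar>"
  using same_sign_if_pairwise_products_nonneg[OF assms]
proof
  assume "\<forall>i. d i \<ge> 0"
  then show ?thesis by (simp cong: sum.cong)
next
  assume "\<forall>i. d i \<le> 0"
  then have "(\<Sum>i\<in>A. \<bar>d i\<bar> * y i) = - (\<Sum>i\<in>A. d i * y i)"
    by (simp add: sum_negf[symmetric] abs_of_nonpos cong: sum.cong)
  then show ?thesis by simp
qed

lemma linear_minorant_in_subdiff:
  fixes f :: "real^'n \<Rightarrow> real"
  assumes "\<And>y. a \<bullet> y \<le> f y"
    and "\<And>y. \<forall>i. y $ i \<ge> 0 \<Longrightarrow> f y = a \<bullet> y"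
    and "\<forall>i. x $ i \<ge> 0"
  shows "a \<in> subdiff f x"
  using assms by (auto simp: subdiff_def inner_diff_right)

lemma subdiff_contribution_eq:
  fixes f :: "real^'n \<Rightarrow> real"
  assumes exact: "\<And>y. \<forall>i. y $ i \<ge> 0 \<Longrightarrow> f y = a \<bullet> y"
    and x_nonneg: "\<forall>i. x $ i \<ge> 0"
    and s: "s \<in> subdiff f x"
  shows "x $ i * s $ i = x $ i * a $ i"
proof -
  have sub: "f x + s \<bullet> (y - x) \<le> f y" for y
    using s by (simp add: subdiff_def)
  have s_le_a: "s $ j \<le> a $ j" for j
  proof -
    have "\<forall>k. (x + axis j 1) $ k \<ge> 0"
      using x_nonneg by (simp add: axis_def)
    then show ?thesis
      using sub[of "x + axis j 1"] exact x_nonneg by (simp add: inner_add_right inner_axis)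
  qed
  have "a \<bullet> x \<le> s \<bullet> x"
    using sub[of 0] exact x_nonneg by simp
  then have "(\<Sum>j\<in>UNIV. x $ j * (a $ j - s $ j)) \<le> 0"
    by (simp add: inner_vec_def algebra_simps sum_subtractf)
  moreover have nonneg: "\<And>j. 0 \<le> x $ j * (a $ j - s $ j)"
    using x_nonneg s_le_a by simp
  ultimately have "(\<Sum>j\<in>UNIV. x $ j * (a $ j - s $ j)) = 0"
    by (meson order_antisym sum_nonneg)
  then have "x $ i * (a $ i - s $ i) = 0"
    using nonneg by (simp add: sum_nonneg_eq_0_iff del: mult_eq_0_iff)
  then show ?thesis by (auto simp: algebra_simps)
qed

lemma prob_simplex_equal_contributions_iff:
  fixes a :: "real^'n"
  assumes a_pos: "\<And>i. a $ i > 0"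
  shows "x \<in> prob_simplex \<and> (\<exists>lam. \<forall>i. x $ i * a $ i = lam) \<longleftrightarrow>
    x = (\<chi> i. inverse (a $ i) / (\<Sum>j\<in>UNIV. inverse (a $ j)))"
proof -
  define S where "S = (\<Sum>j\<in>UNIV. inverse (a $ j))"
  have S_pos: "S > 0"
    unfolding S_def using a_pos by (intro sum_pos) auto
  have "x = (\<chi> i. inverse (a $ i) / S)"
    if "x \<in> prob_simplex" and lam: "\<And>i. x $ i * a $ i = lam" for lam
  proof -
    have x_eq: "x $ i = lam * inverse (a $ i)" for i
      using lam[of i] a_pos[of i] by (simp add: field_simps)
    have "1 = lam * S"
      using \<open>x \<in> prob_simplex\<close> by (simp add: prob_simplex_def x_eq S_def sum_distrib_left)
    then have "lam = inverse S"
      using S_pos by (simp add: field_simps)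
    then show ?thesis
      by (simp add: vec_eq_iff x_eq divide_inverse mult.commute)
  qed
  moreover have "(\<chi> i. inverse (a $ i) / S) \<in> prob_simplex"
    using a_pos S_pos
    by (simp add: prob_simplex_def S_def sum_divide_distrib[symmetric] less_imp_le)
  moreover have "(\<chi> i. inverse (a $ i) / S) $ i * a $ i = 1 / S" for i
    using a_pos[of i] by (simp add: field_simps)
  ultimately show ?thesis
    unfolding S_def[symmetric] by blast
qed

lemma risk_parity_iff_inverse_weights:
  fixes f :: "real^'n \<Rightarrow> real"
  assumes a_pos: "\<And>i. a $ i > 0"
    and minorant: "\<And>y. a \<bullet> y \<le> f y"
    and exact: "\<And>y. \<forall>i. y $ i \<ge> 0 \<Longrightarrow> f y = a \<bullet> y"
  shows "x \<in> prob_simplex \<and> (\<exists>s\<in>subdiff f x. \<exists>lam. \<forall>i. x $ i * s $ i = lam) \<longleftrightarrow>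
    x = (\<chi> i. inverse (a $ i) / (\<Sum>j\<in>UNIV. inverse (a $ j)))"
proof -
  have "x \<in> prob_simplex \<and> (\<exists>s\<in>subdiff f x. \<exists>lam. \<forall>i. x $ i * s $ i = lam) \<longleftrightarrow>
      x \<in> prob_simplex \<and> (\<exists>lam. \<forall>i. x $ i * a $ i = lam)"
  proof (cases "\<forall>i. x $ i \<ge> 0")
    case True
    then show ?thesis
      using subdiff_contribution_eq[OF exact True] linear_minorant_in_subdiff[OF minorant exact True]
      by metis
  qed (auto simp: prob_simplex_def)
  also have "\<dots> \<longleftrightarrow> x = (\<chi> i. inverse (a $ i) / (\<Sum>j\<in>UNIV. inverse (a $ j)))"
    by (rule prob_simplex_equal_contributions_iff[OF a_pos])
  finally show ?thesis .
qed

lemma inner_abs_dev: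
  fixes r :: "'t::finite \<Rightarrow> 'n::finite \<Rightarrow> real"
  shows "(\<chi> i. abs_dev r i) \<bullet> y =
    (\<Sum>t\<in>UNIV. \<Sum>i\<in>UNIV. \<bar>r t i - mean_ret r i\<bar> * y $ i) / real CARD('t)"
proof -
  have "(\<chi> i. abs_dev r i) \<bullet> y =
      (\<Sum>i\<in>UNIV. \<Sum>t\<in>UNIV. \<bar>r t i - mean_ret r i\<bar> * y $ i) / real CARD('t)"
    by (simp add: inner_vec_def abs_dev_def sum_divide_distrib sum_distrib_right)
  then show ?thesis
    by (simp only: sum.swap[of _ "UNIV :: 'n set"])
qed

lemma inner_abs_dev_le_MAD:
  fixes r :: "'t::finite \<Rightarrow> 'n::finite \<Rightarrow> real"
  assumes "\<And>t i j. i \<noteq> j \<Longrightarrow> (r t i - mean_ret r i) * (r t j - mean_ret r j) \<ge> 0"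
  shows "(\<chi> i. abs_dev r i) \<bullet> y \<le> MAD r y"
proof -
  have "(\<Sum>i\<in>UNIV. \<bar>r t i - mean_ret r i\<bar> * y $ i) \<le>
      \<bar>\<Sum>i\<in>UNIV. \<bar>r t i - mean_ret r i\<bar> * y $ i\<bar>" for t
    by (rule abs_ge_self)
  also have "\<bar>\<Sum>i\<in>UNIV. \<bar>r t i - mean_ret r i\<bar> * y $ i\<bar> =
      \<bar>\<Sum>i\<in>UNIV. (r t i - mean_ret r i) * y $ i\<bar>" for t
    by (rule abs_sum_abs_mult_eq_abs_sum_mult[OF assms])
  finally show ?thesis
    unfolding inner_abs_dev MAD_def by (intro divide_right_mono sum_mono) auto
qed

lemma MAD_eq_inner_abs_dev:
  fixes r :: "'t::finite \<Rightarrow> 'n::finite \<Rightarrow> real"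
  assumes "\<And>t i j. i \<noteq> j \<Longrightarrow> (r t i - mean_ret r i) * (r t j - mean_ret r j) \<ge> 0"
    and "\<forall>i. y $ i \<ge> 0"
  shows "MAD r y = (\<chi> i. abs_dev r i) \<bullet> y"
proof -
  have "\<bar>\<Sum>i\<in>UNIV. (r t i - mean_ret r i) * y $ i\<bar> =
      (\<Sum>i\<in>UNIV. \<bar>r t i - mean_ret r i\<bar> * y $ i)" for t
    using abs_sum_abs_mult_eq_abs_sum_mult[of "\<lambda>i. r t i - mean_ret r i" "\<lambda>i. y $ i" UNIV]
      assms
    by (simp add: sum_nonneg)
  then show ?thesis
    unfolding inner_abs_dev MAD_def by simp
qed

lemma abs_dev_pos:
  fixes r :: "'t::finite \<Rightarrow> 'n::finite \<Rightarrow> real"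
  assumes "\<And>x::real^'n. \<forall>i. x $ i \<ge> 0 \<Longrightarrow>
      \<forall>t. (\<Sum>i\<in>UNIV. (r t i - mean_ret r i) * x $ i) = 0 \<Longrightarrow> x = 0"
  shows "abs_dev r i > 0"
proof -
  have "\<forall>j. axis i (1::real) $ j \<ge> 0"
    by (simp add: axis_def)
  moreover have "(\<Sum>j\<in>UNIV. (r t j - mean_ret r j) * axis i 1 $ j) = r t i - mean_ret r i" for t
    by (simp add: axis_def if_distrib cong: if_cong)
  ultimately obtain t where "r t i - mean_ret r i \<noteq> 0"
    using assms[of "axis i 1"] by force
  then have "0 < (\<Sum>t\<in>UNIV. \<bar>r t i - mean_ret r i\<bar>)"
    by (intro sum_pos2[of UNIV t]) auto
  then show ?thesis
    by (simp add: abs_dev_def)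
qed

theorem proposition3:
  fixes r :: "'t::finite \<Rightarrow> 'n::finite \<Rightarrow> real"
  assumes nondeg: "\<And>x::real^'n. (\<forall>i. x $ i \<ge> 0) \<Longrightarrow>
      (\<forall>t. (\<Sum>i\<in>UNIV. (r t i - mean_ret r i) * x $ i) = 0) \<Longrightarrow> x = 0"
    and comon: "\<And>t i j. i \<noteq> j \<Longrightarrow> (r t i - mean_ret r i) * (r t j - mean_ret r j) \<ge> 0"
  shows "{x. MAD_RP r x} =
    {\<chi> i. inverse (abs_dev r i) / (\<Sum>j\<in>UNIV. inverse (abs_dev r j))}"
proof -
  have "MAD_RP r x \<longleftrightarrow> x = (\<chi> i. inverse (abs_dev r i) / (\<Sum>j\<in>UNIV. inverse (abs_dev r j)))"
    for x
    using risk_parity_iff_inverse_weights[of "\<chi> i. abs_dev r i" "MAD r" x]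
      abs_dev_pos[of r, OF nondeg] inner_abs_dev_le_MAD[of r, OF comon]
      MAD_eq_inner_abs_dev[of r, OF comon]
    by (simp add: MAD_RP_def)
  then show ?thesis by auto
qed

end
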